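(* For every response $y$, $$\mathbb{E}_N\big[(\hat\pi_N(y|x))^2\big]=\frac{(\phi_\beta(y|x))^2}{1-e^{-n}}\int_0^\infty\!\!\int_0^\infty\big(n+n^2\Phi_\beta(s_1)\Phi_\beta(s_2)\big)(\pi_{\mathrm{gen}}(y|x))^2e^{-(s_1+s_2)\phi_\beta(y|x)}\exp\big(n[\Phi_\beta(s_1)\Phi_\beta(s_2)-1]\big)\,ds_1\,ds_2.$$
   Context: Fix a prompt $x$, a countable response space $\mathcal{Y}$, conditional distributions $\pi_{\mathrm{target}}$ and $\pi_{\mathrm{gen}}$ (full support), a reward $r$, and $\beta>0$. Let $\phi_\beta(y|x)=\frac{\pi_{\mathrm{target}}(y|x)}{\pi_{\mathrm{gen}}(y|x)}e^{\beta r(y|x)}$ and $\Phi_\beta(s)=\mathbb{E}_{Y\sim\pi_{\mathrm{gen}}(\cdot|x)}[e^{-s\phi_\beta(Y|x)}]$ for $s\ge0$. Let $N\sim\mathrm{Poi}(n)|_{>0}$ (Poisson with mean $n$ conditioned to be positive) and, given $N$, let $Y_1,\dots,Y_N$ be i.i.d. from $\pi_{\mathrm{gen}}(\cdot|x)$; $N_y$ is the number of $j$ with $Y_j=y$ and $Z=\sum_{j=1}^N\phi_\beta(Y_j|x)$. Define $\hat\pi_N(y|x)=\mathbb{E}[N_y\phi_\beta(y|x)/Z\mid N]$. *)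

theory Defs
  imports "HOL-Probability.Probability"
begin

text \<open>The prompt x is fixed throughout, so conditional distributions on x are
  represented simply as pmfs on the countable response type 'y.\<close>

definition phi_beta :: "'y pmf \<Rightarrow> 'y pmf \<Rightarrow> ('y \<Rightarrow> real) \<Rightarrow> real \<Rightarrow> 'y \<Rightarrow> real" where
  "phi_beta pt pg r \<beta> y = pmf pt y / pmf pg y * exp (\<beta> * r y)"

definition Phi_beta :: "'y pmf \<Rightarrow> 'y pmf \<Rightarrow> ('y \<Rightarrow> real) \<Rightarrow> real \<Rightarrow> real \<Rightarrow> real" where
  "Phi_beta pt pg r \<beta> s =
     measure_pmf.expectation pg (\<lambda>Y. exp (- s * phi_beta pt pg r \<beta> Y))"

definition N_dist :: "real \<Rightarrow> nat pmf" where
  "N_dist n = cond_pmf (poisson_pmf n) {k. 0 < k}"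

text \<open>Given N = k, the samples Y_0..Y_{k-1} are iid from pg (a random function on {..<k}).
  pihat k y = E[ N_y * phi(y) / Z | N = k ], with N_y = #{j<k. Y_j = y}, Z = sum_j phi(Y_j).\<close>
definition pihat :: "'y pmf \<Rightarrow> 'y pmf \<Rightarrow> ('y \<Rightarrow> real) \<Rightarrow> real \<Rightarrow> nat \<Rightarrow> 'y \<Rightarrow> real" where
  "pihat pt pg r \<beta> k y =
     measure_pmf.expectation (Pi_pmf {..<k} undefined (\<lambda>_. pg))
       (\<lambda>Y. real (card {j\<in>{..<k}. Y j = y}) * phi_beta pt pg r \<beta> y
             / (\<Sum>j<k. phi_beta pt pg r \<beta> (Y j)))"

end

theory Submission
  imports Defs
begin

text \<open>Writing \<open>1/Z = \<integral>\<^sub>0\<^sup>\<infinity> exp (-s Z) ds\<close> and using the independence of the samples,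
  the conditional expectation given \<open>N = k\<close> becomes
  \<open>\<phi>(y) \<pi>\<^sub>g\<^sub>e\<^sub>n(y) k \<integral>\<^sub>0\<^sup>\<infinity> exp (-s \<phi>(y)) \<Phi>(s)\<^bsup>k-1\<^esup> ds\<close>.
  Its square is a double integral whose integrand contains \<open>(\<Phi>(s\<^sub>1) \<Phi>(s\<^sub>2))\<^bsup>k-1\<^esup>\<close>, and averaging over
  the truncated Poisson law sums the series \<open>\<Sum>\<^sub>k k\<^sup>2 n\<^sup>k/k! x\<^bsup>k-1\<^esup> = (n + n\<^sup>2 x) e\<^bsup>nx\<^esup>\<close>.
  All terms are nonnegative and dominated by a multiple of \<open>exp (-(s\<^sub>1 + s\<^sub>2) \<phi>(y))\<close>, so the series
  may be integrated termwise.\<close>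

lemma has_bochner_integral_exp_neg_mult:
  fixes c :: real
  assumes "c > 0"
  shows "has_bochner_integral lborel (\<lambda>s. indicator {0..} s * exp (- s * c)) (1 / c)"
proof (rule has_bochner_integral_nn_integral)
  have "(\<integral>\<^sup>+ s. ennreal (indicator {0..} s * exp (- s * c)) \<partial>lborel)
      = (\<integral>\<^sup>+ s. ennreal (1 / c) * ennreal (erlang_density 0 c s * s ^ 0) \<partial>lborel)"
    using assms
    by (intro nn_integral_cong) (auto simp: erlang_density_def ennreal_mult'[symmetric] indicator_def)
  also have "\<dots> = ennreal (1 / c)"
    using nn_integral_erlang_ith_moment[OF assms, of 0 0] by (simp add: nn_integral_cmult)
  finally show "(\<integral>\<^sup>+ s. ennreal (indicator {0..} s * exp (- s * c)) \<partial>lborel) = ennreal (1 / c)" .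
qed (use assms in auto)

lemma has_bochner_integral_mult_exp_neg_mult:
  fixes a z :: real
  assumes "0 < z \<or> a = 0"
  shows "has_bochner_integral lborel (\<lambda>s. indicator {0..} s * (a * exp (- s * z))) (a / z)"
  using assms
proof
  assume "0 < z"
  from has_bochner_integral_mult_right[OF has_bochner_integral_exp_neg_mult[OF this], of a]
  show ?thesis by (simp add: mult_ac)
qed (simp add: has_bochner_integral_zero)

lemma sums_integral_nonneg:
  fixes f :: "nat \<Rightarrow> 'a \<Rightarrow> real"
  assumes f: "\<And>i. integrable M (f i)" and nonneg: "\<And>i x. 0 \<le> f i x"
    and sums: "\<And>x. (\<lambda>i. f i x) sums S x" and S: "integrable M S"
  shows "(\<lambda>i. integral\<^sup>L M (f i)) sums integral\<^sup>L M S"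
proof -
  have "(\<lambda>m. \<integral>x. (\<Sum>i<m. f i x) \<partial>M) \<longlonglongrightarrow> integral\<^sup>L M S"
  proof (rule integral_dominated_convergence[OF _ _ S])
    show "AE x in M. (\<lambda>m. \<Sum>i<m. f i x) \<longlonglongrightarrow> S x"
      using sums by (simp add: sums_def)
    show "AE x in M. norm (\<Sum>i<m. f i x) \<le> S x" for m
      using sums sum_le_suminf[of "\<lambda>i. f i _" "{..<m}"] nonneg
      by (auto simp: sums_iff sum_nonneg)
  qed (use f S in auto)
  then show ?thesis
    by (simp add: sums_def f)
qed

lemma sums_weighted_square_integral:
  fixes a :: "nat \<Rightarrow> real \<Rightarrow> real" and w :: "nat \<Rightarrow> real"
  assumes a_int: "\<And>k. integrable lborel (a k)" and a_nonneg: "\<And>k x. 0 \<le> a k x" and w_nonneg: "\<And>k. 0 \<le> w k"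
    and S_sums: "\<And>x1 x2. (\<lambda>k. w k * a k x1 * a k x2) sums S x1 x2"
    and S_meas: "(\<lambda>(x1, x2). S x1 x2) \<in> borel_measurable (lborel \<Otimes>\<^sub>M lborel)"
    and u_int: "integrable lborel u" and v_int: "integrable lborel v"
    and S_le: "\<And>x1 x2. S x1 x2 \<le> u x1 * v x2" and v_nonneg: "\<And>x. 0 \<le> v x"
  shows "(\<lambda>k. w k * (integral\<^sup>L lborel (a k))\<^sup>2) sums (\<integral>x1. \<integral>x2. S x1 x2 \<partial>lborel \<partial>lborel)"
proof -
  have S_nonneg: "0 \<le> S x1 x2" for x1 x2
    by (rule sums_le[OF _ sums_zero S_sums]) (simp add: w_nonneg a_nonneg)
  have S_int: "integrable lborel (S x1)" for x1
  proof (rule Bochner_Integration.integrable_bound[where f="\<lambda>x2. u x1 * v x2"])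
    show "AE x2 in lborel. norm (S x1 x2) \<le> norm (u x1 * v x2)"
      using S_nonneg order_trans[OF S_le abs_ge_self] by (intro AE_I2) simp
  qed (use v_int S_meas in \<open>simp_all add: measurable_Pair2'\<close>)
  have inner: "(\<lambda>k. w k * a k x1 * integral\<^sup>L lborel (a k)) sums (\<integral>x2. S x1 x2 \<partial>lborel)" for x1
  proof -
    have "(\<lambda>k. \<integral>x2. w k * a k x1 * a k x2 \<partial>lborel) sums (\<integral>x2. S x1 x2 \<partial>lborel)"
      by (rule sums_integral_nonneg[where S="S x1"]) (use a_int w_nonneg a_nonneg S_sums S_int in simp_all)
    then show ?thesis
      by simp
  qed
  have "(\<lambda>k. \<integral>x1. w k * a k x1 * integral\<^sup>L lborel (a k) \<partial>lborel) sums (\<integral>x1. \<integral>x2. S x1 x2 \<partial>lborel \<partial>lborel)"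
  proof (rule sums_integral_nonneg[OF _ _ inner])
    have bound: "norm (\<integral>x2. S x1 x2 \<partial>lborel) \<le> norm (u x1 * integral\<^sup>L lborel v)" for x1
    proof -
      have "(\<integral>x2. S x1 x2 \<partial>lborel) \<le> (\<integral>x2. u x1 * v x2 \<partial>lborel)"
        by (rule integral_mono) (use S_int v_int S_le in simp_all)
      then show ?thesis
        using S_nonneg by (simp add: integral_nonneg abs_le_iff)
    qed
    show "integrable lborel (\<lambda>x1. \<integral>x2. S x1 x2 \<partial>lborel)"
      by (rule Bochner_Integration.integrable_bound[where f="\<lambda>x1. u x1 * integral\<^sup>L lborel v"])
         (use u_int S_meas AE_I2[OF bound] in simp_all)
  qed (use a_int w_nonneg a_nonneg integral_nonneg in simp_all)
  then show ?thesis
    by (simp add: power2_eq_square mult.assoc)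
qed

lemma Fubini_integral_measure_pmf_lborel:
  fixes G :: "'a \<Rightarrow> real \<Rightarrow> real"
  assumes [measurable]: "(\<lambda>(Y, s). G Y s) \<in> borel_measurable (measure_pmf q \<Otimes>\<^sub>M lborel)"
    and nonneg: "\<And>Y s. 0 \<le> G Y s" and inner: "\<And>Y. integrable lborel (G Y)"
    and outer: "integrable (measure_pmf q) (\<lambda>Y. \<integral>s. G Y s \<partial>lborel)"
  shows "(\<integral>Y. (\<integral>s. G Y s \<partial>lborel) \<partial>measure_pmf q) = (\<integral>s. (\<integral>Y. G Y s \<partial>measure_pmf q) \<partial>lborel)"
proof -
  interpret pair_sigma_finite "measure_pmf q" lborel
    unfolding pair_sigma_finite_def
    by (simp add: lborel.sigma_finite_measure_axioms measure_pmf.sigma_finite_measure_axioms)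
  have "integrable (measure_pmf q \<Otimes>\<^sub>M lborel) (\<lambda>(Y, s). G Y s)"
    by (rule Fubini_integrable) (use nonneg inner outer in simp_all)
  then show ?thesis
    by (simp add: Fubini_integral)
qed

definition laplace_pmf :: "'a pmf \<Rightarrow> ('a \<Rightarrow> real) \<Rightarrow> real \<Rightarrow> real" where
  "laplace_pmf p f s = measure_pmf.expectation p (\<lambda>z. exp (- s * f z))"

lemma borel_measurable_laplace_pmf [measurable]: "laplace_pmf p f \<in> borel_measurable borel"
proof -
  have [measurable]: "f \<in> borel_measurable (count_space UNIV)" by simp
  show ?thesis
    unfolding laplace_pmf_def[abs_def]
    by (intro measure_pmf.borel_measurable_lebesgue_integral) measurable
qed

lemma integrable_exp_neg_mult_pmf:
  fixes f :: "'a \<Rightarrow> real" and s :: real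
  assumes "\<And>z. 0 \<le> f z" "0 \<le> s"
  shows "integrable (measure_pmf p) (\<lambda>z. exp (- s * f z))"
proof (rule measure_pmf.integrable_const_bound[where B=1])
  show "AE z in measure_pmf p. norm (exp (- s * f z)) \<le> 1"
  proof (intro AE_I2)
    fix z
    have "0 \<le> s * f z" using assms by (intro mult_nonneg_nonneg)
    then show "norm (exp (- s * f z)) \<le> 1" by simp
  qed
qed simp

lemma laplace_pmf_nonneg_le_one:
  fixes f :: "'a \<Rightarrow> real" and s :: real
  assumes "\<And>z. 0 \<le> f z" "0 \<le> s"
  shows "0 \<le> laplace_pmf p f s \<and> laplace_pmf p f s \<le> 1"
proof
  show "0 \<le> laplace_pmf p f s"
    unfolding laplace_pmf_def by (intro Bochner_Integration.integral_nonneg) auto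
  have "laplace_pmf p f s \<le> measure_pmf.expectation p (\<lambda>_. 1)"
    unfolding laplace_pmf_def using assms
    by (intro integral_mono integrable_exp_neg_mult_pmf) auto
  then show "laplace_pmf p f s \<le> 1" by simp
qed

lemma expectation_count_mult_prod_Pi_pmf:
  fixes g :: "'a \<Rightarrow> real"
  assumes g_int: "integrable (measure_pmf p) g" and g_nonneg: "\<And>z. 0 \<le> g z"
  shows "measure_pmf.expectation (Pi_pmf {..<k} d (\<lambda>_. p))
      (\<lambda>Y. real (card {j\<in>{..<k}. Y j = y}) * (\<Prod>i<k. g (Y i)))
    = real k * (pmf p y * g y) * measure_pmf.expectation p g ^ (k - 1)"
proof -
  define h where "h j i z = g z * (if i = j then indicator {y} z else 1)" for j i :: nat and z
  have h_int: "integrable (measure_pmf p) (h j i)" for j i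
    unfolding h_def using g_int by (cases "i = j") (auto intro: integrable_real_mult_indicator)
  have h_nonneg: "0 \<le> h j i z" for j i z
    unfolding h_def using g_nonneg by simp
  have count_prod: "real (card {j\<in>{..<k}. Y j = y}) * (\<Prod>i<k. g (Y i)) = (\<Sum>j<k. \<Prod>i<k. h j i (Y i))" for Y
  proof -
    have "(\<Prod>i<k. h j i (Y i)) = (\<Prod>i<k. g (Y i)) * indicator {y} (Y j)" if "j < k" for j
    proof -
      have "(\<Prod>i<k. h j i (Y i))
          = (\<Prod>i<k. g (Y i)) * (\<Prod>i<k. if i = j then indicator {y} (Y i) else 1)"
        unfolding h_def by (rule prod.distrib)
      then show ?thesis
        using that by (simp add: prod.delta)
    qed
    moreover have "real (card {j\<in>{..<k}. Y j = y}) = (\<Sum>j<k. indicator {y} (Y j))"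
      by (simp add: indicator_def sum.inter_filter[symmetric] Collect_conj_eq lessThan_def)
    ultimately show ?thesis
      by (simp add: sum_distrib_right mult.commute)
  qed
  have expectation_h: "(\<Prod>i<k. measure_pmf.expectation p (h j i))
      = pmf p y * g y * measure_pmf.expectation p g ^ (k - 1)" if "j < k" for j
  proof -
    have "h j j = (\<lambda>z. g y * indicator {y} z)"
      by (auto simp: h_def fun_eq_iff indicator_def)
    then have "measure_pmf.expectation p (h j j) = pmf p y * g y"
      by (simp add: measure_pmf_single)
    moreover have "measure_pmf.expectation p (h j i) = measure_pmf.expectation p g" if "i \<noteq> j" for i
      using that by (simp add: h_def[abs_def])
    ultimately show ?thesis
      using that by (simp add: prod.remove[of "{..<k}" j] card_Diff_singleton)
  qed
  have "measure_pmf.expectation (Pi_pmf {..<k} d (\<lambda>_. p))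
      (\<lambda>Y. real (card {j\<in>{..<k}. Y j = y}) * (\<Prod>i<k. g (Y i)))
    = (\<Sum>j<k. measure_pmf.expectation (Pi_pmf {..<k} d (\<lambda>_. p)) (\<lambda>Y. \<Prod>i<k. h j i (Y i)))"
    unfolding count_prod by (intro Bochner_Integration.integral_sum integrable_prod_Pi_pmf h_int) auto
  also have "\<dots> = (\<Sum>j<k. \<Prod>i<k. measure_pmf.expectation p (h j i))"
    by (intro sum.cong refl expectation_prod_Pi_pmf h_int h_nonneg) auto
  also have "\<dots> = real k * (pmf p y * g y) * measure_pmf.expectation p g ^ (k - 1)"
    by (simp add: expectation_h)
  finally show ?thesis .
qed

lemma expectation_count_mult_exp_neg_sum_Pi_pmf:
  fixes f :: "'a \<Rightarrow> real" and s :: real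
  assumes "\<And>z. 0 \<le> f z" "0 \<le> s"
  shows "measure_pmf.expectation (Pi_pmf {..<k} d (\<lambda>_. p))
      (\<lambda>Y. real (card {j\<in>{..<k}. Y j = y}) * exp (- s * (\<Sum>j<k. f (Y j))))
    = real k * pmf p y * exp (- s * f y) * laplace_pmf p f s ^ (k - 1)"
proof -
  have "exp (- s * (\<Sum>j<k. f (Y j))) = (\<Prod>j<k. exp (- s * f (Y j)))" for Y :: "nat \<Rightarrow> 'a"
    by (simp add: sum_distrib_left exp_sum[symmetric])
  then have "measure_pmf.expectation (Pi_pmf {..<k} d (\<lambda>_. p))
      (\<lambda>Y. real (card {j\<in>{..<k}. Y j = y}) * exp (- s * (\<Sum>j<k. f (Y j))))
    = measure_pmf.expectation (Pi_pmf {..<k} d (\<lambda>_. p))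
      (\<lambda>Y. real (card {j\<in>{..<k}. Y j = y}) * (\<Prod>j<k. exp (- s * f (Y j))))"
    by simp
  also have "\<dots> = real k * (pmf p y * exp (- s * f y)) * laplace_pmf p f s ^ (k - 1)"
    unfolding laplace_pmf_def
    by (rule expectation_count_mult_prod_Pi_pmf[OF integrable_exp_neg_mult_pmf[OF assms]]) simp
  finally show ?thesis
    by (simp add: mult_ac)
qed

lemma count_mult_le_sum:
  fixes f :: "'a \<Rightarrow> real" and Y :: "nat \<Rightarrow> 'a"
  assumes "\<And>z. 0 \<le> f z"
  shows "real (card {j\<in>{..<k}. Y j = y}) * f y \<le> (\<Sum>j<k. f (Y j))"
proof -
  have "real (card {j\<in>{..<k}. Y j = y}) * f y = (\<Sum>j\<in>{j\<in>{..<k}. Y j = y}. f (Y j))"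
    by simp
  also have "\<dots> \<le> (\<Sum>j<k. f (Y j))"
    by (intro sum_mono2) (auto intro: assms)
  finally show ?thesis .
qed

lemma count_mult_div_sum_bounds:
  fixes f :: "'a \<Rightarrow> real" and Y :: "nat \<Rightarrow> 'a"
  assumes "\<And>z. 0 \<le> f z"
  shows "0 \<le> real (card {j\<in>{..<k}. Y j = y}) * f y / (\<Sum>j<k. f (Y j))
    \<and> real (card {j\<in>{..<k}. Y j = y}) * f y / (\<Sum>j<k. f (Y j)) \<le> 1"
proof -
  have "real (card {j\<in>{..<k}. Y j = y}) * f y \<le> (\<Sum>j<k. f (Y j))"
    by (rule count_mult_le_sum[OF assms])
  moreover have "0 \<le> real (card {j\<in>{..<k}. Y j = y}) * f y"
    using assms[of y] by simp
  ultimately show ?thesis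
    by (cases "(\<Sum>j<k. f (Y j)) = 0") (auto simp: divide_le_eq)
qed

lemma integrable_count_mult_div_sum_Pi_pmf:
  fixes f :: "'a \<Rightarrow> real" and k :: nat
  assumes "\<And>z. 0 \<le> f z"
  shows "integrable (measure_pmf (Pi_pmf {..<k} d (\<lambda>_. p)))
    (\<lambda>Y. real (card {j\<in>{..<k}. Y j = y}) * f y / (\<Sum>j<k. f (Y j)))"
proof (rule measure_pmf.integrable_const_bound[where B=1])
  show "AE Y in measure_pmf (Pi_pmf {..<k} d (\<lambda>_. p)).
      norm (real (card {j\<in>{..<k}. Y j = y}) * f y / (\<Sum>j<k. f (Y j))) \<le> 1"
  proof (rule AE_I2)
    fix Y :: "nat \<Rightarrow> 'a"
    from count_mult_div_sum_bounds[of f, OF assms, of k Y y]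
    show "norm (real (card {j\<in>{..<k}. Y j = y}) * f y / (\<Sum>j<k. f (Y j))) \<le> 1"
      by (auto simp only: real_norm_def abs_le_iff)
  qed
qed simp

lemma expectation_count_mult_div_sum_bounds:
  fixes f :: "'a \<Rightarrow> real" and k :: nat
  assumes "\<And>z. 0 \<le> f z"
  shows "0 \<le> measure_pmf.expectation (Pi_pmf {..<k} d (\<lambda>_. p))
      (\<lambda>Y. real (card {j\<in>{..<k}. Y j = y}) * f y / (\<Sum>j<k. f (Y j)))
    \<and> measure_pmf.expectation (Pi_pmf {..<k} d (\<lambda>_. p))
      (\<lambda>Y. real (card {j\<in>{..<k}. Y j = y}) * f y / (\<Sum>j<k. f (Y j))) \<le> 1"
  using integrable_count_mult_div_sum_Pi_pmf[of f, OF assms] count_mult_div_sum_bounds[of f, OF assms]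
  by (intro conjI measure_pmf.integral_ge_const measure_pmf.integral_le_const AE_I2) auto

lemma expectation_count_mult_div_sum_Pi_pmf:
  fixes f :: "'a \<Rightarrow> real"
  assumes f_nonneg: "\<And>z. 0 \<le> f z" and fy: "0 < f y"
  shows "measure_pmf.expectation (Pi_pmf {..<k} d (\<lambda>_. p))
      (\<lambda>Y. real (card {j\<in>{..<k}. Y j = y}) * f y / (\<Sum>j<k. f (Y j)))
    = f y * real k * pmf p y * (LBINT s:{0..}. exp (- s * f y) * laplace_pmf p f s ^ (k - 1))"
proof -
  define M where "M = measure_pmf (Pi_pmf {..<k} d (\<lambda>_. p))"
  define cnt where "cnt Y = real (card {j\<in>{..<k}. Y j = y})" for Y :: "nat \<Rightarrow> 'a"
  define Z where "Z Y = (\<Sum>j<k. f (Y j))" for Y :: "nat \<Rightarrow> 'a"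
  define G where "G Y s = indicator {0..} s * (cnt Y * f y * exp (- s * Z Y))" for Y s
  have laplace_inverse: "has_bochner_integral lborel (G Y) (cnt Y * f y / Z Y)" for Y
  proof -
    have "cnt Y * f y \<le> Z Y"
      unfolding cnt_def Z_def by (rule count_mult_le_sum[of f, OF f_nonneg])
    moreover have "0 \<le> cnt Y * f y"
      using fy by (simp add: cnt_def)
    ultimately have "0 < Z Y \<or> cnt Y * f y = 0"
      by linarith
    then show ?thesis
      unfolding G_def[abs_def] by (rule has_bochner_integral_mult_exp_neg_mult)
  qed
  have Fubini: "(\<integral>Y. (\<integral>s. G Y s \<partial>lborel) \<partial>M) = (\<integral>s. (\<integral>Y. G Y s \<partial>M) \<partial>lborel)"
    unfolding M_def
  proof (rule Fubini_integral_measure_pmf_lborel)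
    have [measurable]: "cnt \<in> borel_measurable (measure_pmf (Pi_pmf {..<k} d (\<lambda>_. p)))"
      "Z \<in> borel_measurable (measure_pmf (Pi_pmf {..<k} d (\<lambda>_. p)))"
      by simp_all
    show "(\<lambda>(Y, s). G Y s) \<in> borel_measurable (measure_pmf (Pi_pmf {..<k} d (\<lambda>_. p)) \<Otimes>\<^sub>M lborel)"
      unfolding G_def by measurable
    show "0 \<le> G Y s" for Y s
      using fy by (simp add: G_def cnt_def)
    show "integrable lborel (G Y)" for Y
      using laplace_inverse by (simp add: has_bochner_integral_iff)
    show "integrable (measure_pmf (Pi_pmf {..<k} d (\<lambda>_. p))) (\<lambda>Y. \<integral>s. G Y s \<partial>lborel)"
      using integrable_count_mult_div_sum_Pi_pmf[of f, OF f_nonneg] laplace_inverse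
      by (simp add: cnt_def Z_def has_bochner_integral_iff)
  qed
  have inner: "(\<integral>Y. G Y s \<partial>M)
      = f y * real k * pmf p y * (indicator {0..} s * (exp (- s * f y) * laplace_pmf p f s ^ (k - 1)))" for s
  proof (cases "0 \<le> s")
    case True
    then have "(\<lambda>Y. G Y s) = (\<lambda>Y. f y * (cnt Y * exp (- s * Z Y)))"
      by (simp add: G_def fun_eq_iff mult_ac)
    then have "(\<integral>Y. G Y s \<partial>M) = f y * (\<integral>Y. cnt Y * exp (- s * Z Y) \<partial>M)"
      by (simp only: integral_mult_right_zero)
    also have "\<dots> = f y * (real k * pmf p y * exp (- s * f y) * laplace_pmf p f s ^ (k - 1))"
      unfolding M_def cnt_def Z_def by (subst expectation_count_mult_exp_neg_sum_Pi_pmf[OF f_nonneg True]) (rule refl)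
    finally show ?thesis
      using True by (simp add: mult_ac)
  qed (simp add: G_def)
  have "measure_pmf.expectation (Pi_pmf {..<k} d (\<lambda>_. p))
      (\<lambda>Y. real (card {j\<in>{..<k}. Y j = y}) * f y / (\<Sum>j<k. f (Y j)))
    = (\<integral>Y. (\<integral>s. G Y s \<partial>lborel) \<partial>M)"
    using laplace_inverse by (simp add: has_bochner_integral_iff M_def cnt_def Z_def)
  also have "\<dots> = f y * real k * pmf p y
      * (\<integral>s. indicator {0..} s * (exp (- s * f y) * laplace_pmf p f s ^ (k - 1)) \<partial>lborel)"
    unfolding Fubini inner by (rule integral_mult_right_zero)
  finally show ?thesis
    by (simp add: set_lebesgue_integral_def)
qed

lemma sums_pmf_expectation:
  fixes q :: "nat pmf" and F :: "nat \<Rightarrow> real"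
  assumes "\<And>k. \<bar>F k\<bar> \<le> B"
  shows "(\<lambda>k. pmf q k * F k) sums measure_pmf.expectation q F"
proof -
  have "integrable (measure_pmf q) F"
    by (rule measure_pmf.integrable_const_bound[where B=B]) (use assms in auto)
  then have "integrable (count_space UNIV) (\<lambda>k. pmf q k *\<^sub>R F k)"
    unfolding measure_pmf_eq_density by (subst (asm) integrable_density) auto
  then have "(\<lambda>k. pmf q k *\<^sub>R F k) sums integral\<^sup>L (count_space UNIV) (\<lambda>k. pmf q k *\<^sub>R F k)"
    by (rule sums_integral_count_space_nat)
  also have "integral\<^sup>L (count_space UNIV) (\<lambda>k. pmf q k *\<^sub>R F k) = measure_pmf.expectation q F"
    unfolding measure_pmf_eq_density by (subst integral_density) auto
  finally show ?thesis by simp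
qed

lemma pmf_N_dist:
  assumes "0 < n"
  shows "pmf (N_dist n) k = (if 0 < k then n ^ k / fact k * exp (- n) / (1 - exp (- n)) else 0)"
proof -
  have "set_pmf (poisson_pmf n) \<inter> {k. 0 < k} \<noteq> {}"
    using assms by auto
  moreover have "measure_pmf.prob (poisson_pmf n) {k. 0 < k}
      = measure_pmf.prob (poisson_pmf n) (space (measure_pmf (poisson_pmf n)) - {0})"
    by (intro arg_cong[where f="measure_pmf.prob _"]) auto
  moreover have "\<dots> = 1 - exp (- n)"
    by (subst measure_pmf.prob_compl) (use assms in \<open>auto simp: measure_pmf_single\<close>)
  ultimately show ?thesis
    unfolding N_dist_def using assms by (simp add: pmf_cond)
qed

lemma sums_of_nat_mult_exp_series:
  fixes z :: real
  shows "(\<lambda>k. real k * z ^ k / fact k) sums (z * exp z)"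
proof -
  have "(\<lambda>k. z * (z ^ k / fact k)) sums (z * exp z)"
    using exp_converges[of z] by (intro sums_mult) (simp add: divide_inverse mult_ac)
  moreover have "real (Suc k) * z ^ Suc k / fact (Suc k) = z * (z ^ k / fact k)" for k
    by (simp add: divide_simps del: of_nat_Suc)
  ultimately have "(\<lambda>k. real (Suc k) * z ^ Suc k / fact (Suc k)) sums (z * exp z)"
    by simp
  then show ?thesis
    using sums_Suc_iff[of "\<lambda>k. real k * z ^ k / fact k" "z * exp z"] by simp
qed

lemma sums_square_mult_exp_series:
  fixes n x :: real
  shows "(\<lambda>k. real k ^ 2 * n ^ k / fact k * x ^ (k - 1)) sums ((n + n\<^sup>2 * x) * exp (n * x))"
proof -
  have "(\<lambda>k. n * ((n * x) ^ k / fact k) + n * (real k * (n * x) ^ k / fact k))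
      sums (n * exp (n * x) + n * (n * x * exp (n * x)))"
    using exp_converges[of "n * x"] sums_of_nat_mult_exp_series[of "n * x"]
    by (intro sums_add sums_mult) (simp_all add: divide_inverse mult_ac)
  moreover have "real (Suc k) ^ 2 * n ^ Suc k / fact (Suc k) * x ^ (Suc k - 1)
      = n * ((n * x) ^ k / fact k) + n * (real k * (n * x) ^ k / fact k)" for k
    by (simp add: divide_simps power2_eq_square del: of_nat_Suc) (simp add: algebra_simps)
  ultimately have "(\<lambda>k. real (Suc k) ^ 2 * n ^ Suc k / fact (Suc k) * x ^ (Suc k - 1))
      sums ((n + n\<^sup>2 * x) * exp (n * x))"
    by (simp add: algebra_simps power2_eq_square)
  then show ?thesis
    using sums_Suc_iff[of "\<lambda>k. real k ^ 2 * n ^ k / fact k * x ^ (k - 1)"] by simp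
qed

lemma sums_pmf_N_dist_square_power:
  assumes "0 < n"
  shows "(\<lambda>k. pmf (N_dist n) k * (real k ^ 2 * x ^ (k - 1)))
    sums (exp (- n) / (1 - exp (- n)) * ((n + n\<^sup>2 * x) * exp (n * x)))"
proof -
  have weights: "(\<lambda>k. pmf (N_dist n) k * (real k ^ 2 * x ^ (k - 1)))
      = (\<lambda>k. exp (- n) / (1 - exp (- n)) * (real k ^ 2 * n ^ k / fact k * x ^ (k - 1)))"
    by (simp add: fun_eq_iff pmf_N_dist[OF assms] ac_simps)
  show ?thesis
    unfolding weights by (rule sums_mult[OF sums_square_mult_exp_series])
qed

lemma sums_pmf_N_dist_square_laplace_integral:
  fixes Phi :: "real \<Rightarrow> real" and c n :: real
  assumes c: "0 < c" and n: "0 < n" and [measurable]: "Phi \<in> borel_measurable borel"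
    and Phi_bounds: "\<And>s. 0 \<le> s \<Longrightarrow> 0 \<le> Phi s \<and> Phi s \<le> 1"
  shows "(\<lambda>k. pmf (N_dist n) k * (real k * (LBINT s:{0..}. exp (- s * c) * Phi s ^ (k - 1)))\<^sup>2)
    sums (1 / (1 - exp (- n)) * (LBINT s1:{0..}. LBINT s2:{0..}.
      (n + n\<^sup>2 * Phi s1 * Phi s2) * exp (- (s1 + s2) * c) * exp (n * (Phi s1 * Phi s2 - 1))))"
proof -
  define F where "F s1 s2 = (n + n\<^sup>2 * Phi s1 * Phi s2) * exp (- (s1 + s2) * c) * exp (n * (Phi s1 * Phi s2 - 1))"
    for s1 s2
  define S where "S s1 s2 = indicator {0..} s1 * (indicator {0..} s2 * F s1 s2) / (1 - exp (- n))" for s1 s2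
  define e where "e s = indicator {0..} s * exp (- s * c)" for s :: real
  define a where "a k s = e s * Phi s ^ (k - 1)" for k :: nat and s
  have e_int: "integrable lborel e"
    using has_bochner_integral_exp_neg_mult[OF c] by (simp add: e_def[abs_def] has_bochner_integral_iff)
  have "(\<lambda>k. pmf (N_dist n) k * real k ^ 2 * (integral\<^sup>L lborel (a k))\<^sup>2)
      sums (\<integral>s1. \<integral>s2. S s1 s2 \<partial>lborel \<partial>lborel)"
  proof (rule sums_weighted_square_integral[where u="\<lambda>s. (n + n\<^sup>2) / (1 - exp (- n)) * e s" and v=e])
    show "0 \<le> a k s" for k s
      using Phi_bounds[of s] by (auto simp: a_def e_def indicator_def)
    moreover have [measurable]: "a k \<in> borel_measurable borel" for k
      unfolding a_def e_def by measurable
    ultimately show "integrable lborel (a k)" for k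
      using Phi_bounds
      by (intro Bochner_Integration.integrable_bound[OF e_int])
         (auto simp: a_def e_def indicator_def power_le_one intro!: AE_I2)
    show "(\<lambda>k. pmf (N_dist n) k * real k ^ 2 * a k s1 * a k s2) sums S s1 s2" for s1 s2
    proof -
      have "(\<lambda>k. pmf (N_dist n) k * (real k ^ 2 * (Phi s1 * Phi s2) ^ (k - 1)) * (e s1 * e s2))
          sums (exp (- n) / (1 - exp (- n)) * ((n + n\<^sup>2 * (Phi s1 * Phi s2)) * exp (n * (Phi s1 * Phi s2)))
            * (e s1 * e s2))"
        by (intro sums_mult2 sums_pmf_N_dist_square_power n)
      moreover have "exp (- n) / (1 - exp (- n)) * ((n + n\<^sup>2 * (Phi s1 * Phi s2)) * exp (n * (Phi s1 * Phi s2)))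
          * (e s1 * e s2) = S s1 s2"
        by (simp add: S_def F_def e_def exp_add[symmetric] algebra_simps add_divide_distrib)
      ultimately show ?thesis
        by (simp add: a_def power_mult_distrib ac_simps)
    qed
    show "(\<lambda>(s1, s2). S s1 s2) \<in> borel_measurable (lborel \<Otimes>\<^sub>M lborel)"
      unfolding S_def F_def by measurable
    show "S s1 s2 \<le> (n + n\<^sup>2) / (1 - exp (- n)) * e s1 * e s2" for s1 s2
    proof (cases "0 \<le> s1 \<and> 0 \<le> s2")
      case True
      then have "0 \<le> Phi s1 * Phi s2" "Phi s1 * Phi s2 \<le> 1"
        using Phi_bounds[of s1] Phi_bounds[of s2] by (auto intro: mult_le_one)
      then have "n + n\<^sup>2 * Phi s1 * Phi s2 \<le> n + n\<^sup>2" and "exp (n * (Phi s1 * Phi s2 - 1)) \<le> 1"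
        using n by (simp_all add: mult.assoc mult_left_le mult_nonneg_nonpos)
      with n \<open>0 \<le> Phi s1 * Phi s2\<close> have "F s1 s2 \<le> (n + n\<^sup>2) * exp (- (s1 + s2) * c) * 1"
        unfolding F_def by (intro mult_mono) (auto simp: mult.assoc)
      with True n show ?thesis
        by (simp add: S_def e_def exp_add[symmetric] divide_right_mono algebra_simps)
    qed (auto simp: S_def e_def)
    show "0 \<le> e s" for s
      by (simp add: e_def)
  qed (use e_int in simp_all)
  moreover have "(LBINT s:{0..}. exp (- s * c) * Phi s ^ (k - 1)) = integral\<^sup>L lborel (a k)" for k
    by (simp add: set_lebesgue_integral_def a_def[abs_def] e_def mult.assoc)
  moreover have "(\<integral>s1. \<integral>s2. S s1 s2 \<partial>lborel \<partial>lborel) = 1 / (1 - exp (- n)) * (LBINT s1:{0..}. LBINT s2:{0..}. F s1 s2)"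
    by (simp add: S_def set_lebesgue_integral_def)
  ultimately show ?thesis
    by (simp add: F_def power_mult_distrib mult.assoc)
qed

lemma expectation_N_dist_square_count_mult_div_sum:
  fixes f :: "'a \<Rightarrow> real" and n :: real
  assumes f_nonneg: "\<And>z. 0 \<le> f z" and n: "0 < n"
  shows "measure_pmf.expectation (N_dist n) (\<lambda>k. (measure_pmf.expectation (Pi_pmf {..<k} d (\<lambda>_. p))
      (\<lambda>Y. real (card {j\<in>{..<k}. Y j = y}) * f y / (\<Sum>j<k. f (Y j))))\<^sup>2)
    = (f y)\<^sup>2 / (1 - exp (- n)) * (LBINT s1:{0..}. LBINT s2:{0..}.
        (n + n\<^sup>2 * laplace_pmf p f s1 * laplace_pmf p f s2) * (pmf p y)\<^sup>2 * exp (- (s1 + s2) * f y)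
        * exp (n * (laplace_pmf p f s1 * laplace_pmf p f s2 - 1)))"
    (is "measure_pmf.expectation _ (\<lambda>k. (?E k)\<^sup>2) = _")
proof (cases "f y = 0")
  case True
  then show ?thesis by simp
next
  case False
  with f_nonneg have fy: "0 < f y"
    by (simp add: order_less_le)
  define Phi where "Phi = laplace_pmf p f"
  define G where "G s1 s2 = (n + n\<^sup>2 * Phi s1 * Phi s2) * exp (- (s1 + s2) * f y) * exp (n * (Phi s1 * Phi s2 - 1))"
    for s1 s2
  have sums_expectation: "(\<lambda>k. pmf (N_dist n) k * (?E k)\<^sup>2) sums measure_pmf.expectation (N_dist n) (\<lambda>k. (?E k)\<^sup>2)"
    using expectation_count_mult_div_sum_bounds[of f, OF f_nonneg]
    by (intro sums_pmf_expectation[where B=1]) (simp add: power_le_one)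
  have sums_formula: "(\<lambda>k. pmf (N_dist n) k * (?E k)\<^sup>2)
      sums ((f y * pmf p y)\<^sup>2 * (1 / (1 - exp (- n)) * (LBINT s1:{0..}. LBINT s2:{0..}. G s1 s2)))"
  proof -
    have "?E k = f y * pmf p y * (real k * (LBINT s:{0..}. exp (- s * f y) * Phi s ^ (k - 1)))" for k
      unfolding Phi_def expectation_count_mult_div_sum_Pi_pmf[of f, OF f_nonneg fy] by (simp only: ac_simps)
    moreover have "Phi \<in> borel_measurable borel"
      unfolding Phi_def by (rule borel_measurable_laplace_pmf)
    moreover have "0 \<le> Phi s \<and> Phi s \<le> 1" if "0 \<le> s" for s
      unfolding Phi_def by (rule laplace_pmf_nonneg_le_one[of f, OF f_nonneg that])
    ultimately show ?thesis
      using sums_mult[OF sums_pmf_N_dist_square_laplace_integral[OF fy n], of Phi "(f y * pmf p y)\<^sup>2"]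
      by (simp add: Phi_def G_def power_mult_distrib ac_simps)
  qed
  have factor_out: "(LBINT s1:{0..}. LBINT s2:{0..}.
        (n + n\<^sup>2 * Phi s1 * Phi s2) * (pmf p y)\<^sup>2 * exp (- (s1 + s2) * f y) * exp (n * (Phi s1 * Phi s2 - 1)))
      = (pmf p y)\<^sup>2 * (LBINT s1:{0..}. LBINT s2:{0..}. G s1 s2)"
    by (simp add: G_def ac_simps)
  show ?thesis
    unfolding Phi_def[symmetric] factor_out sums_unique2[OF sums_expectation sums_formula]
    by (simp add: power_mult_distrib)
qed

theorem lemmaD2:
  fixes pt pg :: "'y::countable pmf" and r :: "'y \<Rightarrow> real" and \<beta> n :: real and y :: 'y
  assumes "\<beta> > 0" and "n > 0"
    and "\<And>z. pmf pg z > 0"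
  shows "measure_pmf.expectation (N_dist n) (\<lambda>k. (pihat pt pg r \<beta> k y)\<^sup>2)
    = (phi_beta pt pg r \<beta> y)\<^sup>2 / (1 - exp (- n)) *
      (LBINT s1:{0..}. LBINT s2:{0..}.
         (n + n\<^sup>2 * Phi_beta pt pg r \<beta> s1 * Phi_beta pt pg r \<beta> s2) * (pmf pg y)\<^sup>2
         * exp (- (s1 + s2) * phi_beta pt pg r \<beta> y)
         * exp (n * (Phi_beta pt pg r \<beta> s1 * Phi_beta pt pg r \<beta> s2 - 1)))"
proof -
  have phi_nonneg: "0 \<le> phi_beta pt pg r \<beta> z" for z
    by (simp add: phi_beta_def)
  have Phi_beta_eq: "Phi_beta pt pg r \<beta> = laplace_pmf pg (phi_beta pt pg r \<beta>)"
    by (simp add: fun_eq_iff Phi_beta_def laplace_pmf_def)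
  show ?thesis
    unfolding pihat_def Phi_beta_eq
    by (rule expectation_N_dist_square_count_mult_div_sum[of "phi_beta pt pg r \<beta>", OF phi_nonneg \<open>n > 0\<close>])
qed

end
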